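(* For every point $\varrho_K$ of $\mathcal{Q}(r,n)$ (with residue field $K$), the induced map on Zariski tangent spaces $$\imath_*:T_{\varrho_K}\mathcal{Q}(r,n)\to T_{\imath(\varrho_K)}\mathcal{A}(r,n)$$ is injective.
   Context: Fix $V_\infty=\mathbb{C}^r$ with basis $e_a$ and $A_re_a=e_{a+1}$, $e_{r+1}=0$. $\mathcal{Q}(r,n)$ is the fine moduli space of framed cyclic representations $(V,B_1,B_2,B_3,I,J)$ up to $GL(V)$. These have $\dim V=n$ and satisfy $[B_1,B_2]+IJ=0$, $JB_3=A_rJ$, $B_3I=IA_r$ and $[B_3,B_i]=0$ for $i=1,2$; moreover no proper nonzero $B_1,B_2,B_3$-invariant subspace contains $\mathrm{Im}\,I$. $\mathcal{A}(r,n)$ is the fine moduli space of stable ADHM data $(V,B_1,B_2,I,J)$ with $[B_1,B_2]+IJ=0$ and no proper $B_1,B_2$-invariant subspace containing $\mathrm{Im}\,I$. The map $\imath$ forgets $B_3$; it preserves residue fields. *)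

theory Defs
  imports "Jordan_Normal_Form.Matrix"
begin

(* Field K containing C: a field homomorphism from complex into K. *)
definition field_ext_of_C :: "(complex \<Rightarrow> 'k::field) \<Rightarrow> bool" where
  "field_ext_of_C \<phi> \<longleftrightarrow> \<phi> 0 = 0 \<and> \<phi> 1 = 1 \<and>
     (\<forall>x y. \<phi> (x + y) = \<phi> x + \<phi> y) \<and> (\<forall>x y. \<phi> (x * y) = \<phi> x * \<phi> y)"

(* A_r e_a = e_{a+1}, e_{r+1} = 0 (0-indexed here) *)
definition A_mat :: "nat \<Rightarrow> 'k::field mat" where
  "A_mat r = mat r r (\<lambda>(a, b). if a = b + 1 then 1 else 0)"

definition comm :: "'k::field mat \<Rightarrow> 'k mat \<Rightarrow> 'k mat" where
  "comm X Y = X * Y - Y * X"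

definition is_subspace :: "nat \<Rightarrow> 'k::field vec set \<Rightarrow> bool" where
  "is_subspace n W \<longleftrightarrow> W \<subseteq> carrier_vec n \<and> 0\<^sub>v n \<in> W \<and>
     (\<forall>v\<in>W. \<forall>w\<in>W. v + w \<in> W) \<and> (\<forall>c. \<forall>v\<in>W. c \<cdot>\<^sub>v v \<in> W)"

definition invariant :: "'k::field mat \<Rightarrow> 'k vec set \<Rightarrow> bool" where
  "invariant B W \<longleftrightarrow> (\<forall>v\<in>W. B *\<^sub>v v \<in> W)"

definition contains_image :: "nat \<Rightarrow> 'k::field mat \<Rightarrow> 'k vec set \<Rightarrow> bool" where
  "contains_image r I W \<longleftrightarrow> (\<forall>u\<in>carrier_vec r. I *\<^sub>v u \<in> W)"

(* Stable ADHM datum (point of A(r,n) with residue field K) *)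
definition ADHM_stable :: "nat \<Rightarrow> nat \<Rightarrow> 'k::field mat \<Rightarrow> 'k mat \<Rightarrow> 'k mat \<Rightarrow> 'k mat \<Rightarrow> bool" where
  "ADHM_stable r n B1 B2 I J \<longleftrightarrow>
     B1 \<in> carrier_mat n n \<and> B2 \<in> carrier_mat n n \<and> I \<in> carrier_mat n r \<and> J \<in> carrier_mat r n \<and>
     comm B1 B2 + I * J = 0\<^sub>m n n \<and>
     (\<forall>W. is_subspace n W \<and> invariant B1 W \<and> invariant B2 W \<and> contains_image r I W
          \<longrightarrow> W = carrier_vec n)"

(* Stable framed cyclic representation (point of Q(r,n) with residue field K) *)
definition Q_stable :: "nat \<Rightarrow> nat \<Rightarrow> 'k::field mat \<Rightarrow> 'k mat \<Rightarrow> 'k mat \<Rightarrow> 'k mat \<Rightarrow> 'k mat \<Rightarrow> bool" where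
  "Q_stable r n B1 B2 B3 I J \<longleftrightarrow>
     B1 \<in> carrier_mat n n \<and> B2 \<in> carrier_mat n n \<and> B3 \<in> carrier_mat n n \<and>
     I \<in> carrier_mat n r \<and> J \<in> carrier_mat r n \<and>
     comm B1 B2 + I * J = 0\<^sub>m n n \<and> J * B3 = A_mat r * J \<and> B3 * I = I * A_mat r \<and>
     comm B3 B1 = 0\<^sub>m n n \<and> comm B3 B2 = 0\<^sub>m n n \<and>
     (\<forall>W. is_subspace n W \<and> invariant B1 W \<and> invariant B2 W \<and> invariant B3 W \<and> contains_image r I W
          \<longrightarrow> W = carrier_vec n)"

(* First-order deformations (K[eps]-points over the given point) of the ADHM equations:
   tangent vectors (b1,b2,i,j) *)
definition ADHM_tangent :: "nat \<Rightarrow> nat \<Rightarrow> 'k::field mat \<Rightarrow> 'k mat \<Rightarrow> 'k mat \<Rightarrow> 'k mat \<Rightarrow>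
     'k mat \<times> 'k mat \<times> 'k mat \<times> 'k mat \<Rightarrow> bool" where
  "ADHM_tangent r n B1 B2 I J t \<longleftrightarrow> (case t of (b1, b2, i, j) \<Rightarrow>
     b1 \<in> carrier_mat n n \<and> b2 \<in> carrier_mat n n \<and> i \<in> carrier_mat n r \<and> j \<in> carrier_mat r n \<and>
     comm b1 B2 + comm B1 b2 + i * J + I * j = 0\<^sub>m n n)"

(* Infinitesimal GL(V)-action: xi in gl(V) acts by ([xi,B1],[xi,B2],xi I, -J xi) *)
definition ADHM_equiv :: "nat \<Rightarrow> nat \<Rightarrow> 'k::field mat \<Rightarrow> 'k mat \<Rightarrow> 'k mat \<Rightarrow> 'k mat \<Rightarrow>
     'k mat \<times> 'k mat \<times> 'k mat \<times> 'k mat \<Rightarrow> 'k mat \<times> 'k mat \<times> 'k mat \<times> 'k mat \<Rightarrow> bool" where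
  "ADHM_equiv r n B1 B2 I J t t' \<longleftrightarrow> (case t of (b1, b2, i, j) \<Rightarrow> case t' of (b1', b2', i', j') \<Rightarrow>
     (\<exists>\<xi> \<in> carrier_mat n n.
        b1 - b1' = comm \<xi> B1 \<and> b2 - b2' = comm \<xi> B2 \<and> i - i' = \<xi> * I \<and> j - j' = - (J * \<xi>)))"

definition Q_tangent :: "nat \<Rightarrow> nat \<Rightarrow> 'k::field mat \<Rightarrow> 'k mat \<Rightarrow> 'k mat \<Rightarrow> 'k mat \<Rightarrow> 'k mat \<Rightarrow>
     'k mat \<times> 'k mat \<times> 'k mat \<times> 'k mat \<times> 'k mat \<Rightarrow> bool" where
  "Q_tangent r n B1 B2 B3 I J t \<longleftrightarrow> (case t of (b1, b2, b3, i, j) \<Rightarrow>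
     b1 \<in> carrier_mat n n \<and> b2 \<in> carrier_mat n n \<and> b3 \<in> carrier_mat n n \<and>
     i \<in> carrier_mat n r \<and> j \<in> carrier_mat r n \<and>
     comm b1 B2 + comm B1 b2 + i * J + I * j = 0\<^sub>m n n \<and>
     j * B3 + J * b3 = A_mat r * j \<and>
     b3 * I + B3 * i = i * A_mat r \<and>
     comm b3 B1 + comm B3 b1 = 0\<^sub>m n n \<and>
     comm b3 B2 + comm B3 b2 = 0\<^sub>m n n)"

definition Q_equiv :: "nat \<Rightarrow> nat \<Rightarrow> 'k::field mat \<Rightarrow> 'k mat \<Rightarrow> 'k mat \<Rightarrow> 'k mat \<Rightarrow> 'k mat \<Rightarrow>
     'k mat \<times> 'k mat \<times> 'k mat \<times> 'k mat \<times> 'k mat \<Rightarrow> 'k mat \<times> 'k mat \<times> 'k mat \<times> 'k mat \<times> 'k mat \<Rightarrow> bool" where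
  "Q_equiv r n B1 B2 B3 I J t t' \<longleftrightarrow> (case t of (b1, b2, b3, i, j) \<Rightarrow> case t' of (b1', b2', b3', i', j') \<Rightarrow>
     (\<exists>\<xi> \<in> carrier_mat n n.
        b1 - b1' = comm \<xi> B1 \<and> b2 - b2' = comm \<xi> B2 \<and> b3 - b3' = comm \<xi> B3 \<and>
        i - i' = \<xi> * I \<and> j - j' = - (J * \<xi>)))"

(* the differential of the forgetful map: forget b3 *)
definition forget_tangent :: "'k mat \<times> 'k mat \<times> 'k mat \<times> 'k mat \<times> 'k mat \<Rightarrow> 'k mat \<times> 'k mat \<times> 'k mat \<times> 'k mat" where
  "forget_tangent t = (case t of (b1, b2, b3, i, j) \<Rightarrow> (b1, b2, i, j))"

end

theory Submission
  imports Defs "Jordan_Normal_Form.Matrix_Kernel"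
begin

(* Let \<xi> realise the equivalence of the two ADHM tangent vectors and put
   c = (b3 - b3') - [\<xi>, B3]. Subtracting the linearised equations of t and t', the
   linearisation of B3 I = I A_r gives c I = 0, and that of [B3, Bi] = 0 gives [c, Bi] = 0
   by the Jacobi identity, since [B3, Bi] = 0. The subspace of all v with c B3^k v = 0 for
   every k is then B1-, B2- and B3-invariant and contains Im I, because B3^k I = I A_r^k;
   by stability it is the whole space, so c = 0 and \<xi> also realises the equivalence of
   t and t'. *)

(* Versions of the library laws with dimension premises, which simp can discharge. *)
lemma minus_mult_distrib_mat_dims:
  "dim_row A = dim_row B \<Longrightarrow> dim_col A = dim_col B \<Longrightarrow> dim_col A = dim_row C \<Longrightarrow>
   (A - B) * C = A * C - B * (C :: 'a::ring mat)"
  by (rule minus_mult_distrib_mat) (auto intro: carrier_matI)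

lemma mult_minus_distrib_mat_dims:
  "dim_row B = dim_row C \<Longrightarrow> dim_col B = dim_col C \<Longrightarrow> dim_col A = dim_row B \<Longrightarrow>
   A * (B - C) = A * B - A * (C :: 'a::ring mat)"
  by (rule mult_minus_distrib_mat) (auto intro: carrier_matI)

lemma assoc_mult_mat_dims:
  "dim_col A = dim_row B \<Longrightarrow> dim_col B = dim_row C \<Longrightarrow> A * B * C = A * (B * (C :: 'a::semiring_0 mat))"
  by (rule assoc_mult_mat) (auto intro: carrier_matI)

lemmas mult_distrib_assoc_mat_dims =
  minus_mult_distrib_mat_dims mult_minus_distrib_mat_dims assoc_mult_mat_dims

lemma add_eq_zero_mat_imp_eq_uminus:
  fixes X Y :: "'a::ab_group_add mat"
  assumes "X \<in> carrier_mat m k" "Y \<in> carrier_mat m k" and sum: "X + Y = 0\<^sub>m m k"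
  shows "X = - Y"
proof (rule eq_matI)
  fix a b assume "a < dim_row (- Y)" "b < dim_col (- Y)"
  with assms(1,2) arg_cong[OF sum, of "\<lambda>Z. Z $$ (a, b)"] show "X $$ (a, b) = (- Y) $$ (a, b)"
    by (simp add: eq_neg_iff_add_eq_0)
qed (use assms in auto)

lemma minus_eq_zero_mat_iff:
  fixes X Y :: "'a::ab_group_add mat"
  assumes "X \<in> carrier_mat m k" "Y \<in> carrier_mat m k"
  shows "X - Y = 0\<^sub>m m k \<longleftrightarrow> X = Y"
proof
  assume diff: "X - Y = 0\<^sub>m m k"
  show "X = Y"
  proof (rule eq_matI)
    fix a b assume "a < dim_row Y" "b < dim_col Y"
    with assms arg_cong[OF diff, of "\<lambda>Z. Z $$ (a, b)"] show "X $$ (a, b) = Y $$ (a, b)"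
      by simp
  qed (use assms in auto)
qed (use assms in simp)

lemma comm_dims [simp]:
  "dim_row (comm X Y) = dim_row Y" "dim_col (comm X Y) = dim_col X"
  by (simp_all add: comm_def)

lemma comm_carrier_mat [simp]:
  "X \<in> carrier_mat n n \<Longrightarrow> Y \<in> carrier_mat n n \<Longrightarrow> comm X Y \<in> carrier_mat n n"
  unfolding comm_def by (metis minus_carrier_mat mult_carrier_mat)

lemma comm_eq_zero_iff:
  assumes "X \<in> carrier_mat n n" "Y \<in> carrier_mat n n"
  shows "comm X Y = 0\<^sub>m n n \<longleftrightarrow> X * Y = (Y * X :: 'a::field mat)"
  unfolding comm_def using assms by (intro minus_eq_zero_mat_iff) auto

lemma comm_minus_left:
  assumes "X \<in> carrier_mat n n" "Y \<in> carrier_mat n n" "Z \<in> carrier_mat n n"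
  shows "comm (X - Y) Z = comm X Z - comm Y (Z :: 'a::field mat)"
proof -
  have "comm (X - Y) Z = X * Z - Y * Z - (Z * X - Z * Y)"
    using assms by (simp add: comm_def mult_distrib_assoc_mat_dims)
  also have "\<dots> = comm X Z - comm Y Z"
    unfolding comm_def by (rule eq_matI) (use assms in \<open>simp_all del: index_mult_mat(1)\<close>)
  finally show ?thesis .
qed

lemma comm_minus_right:
  assumes "X \<in> carrier_mat n n" "Y \<in> carrier_mat n n" "Z \<in> carrier_mat n n"
  shows "comm X (Y - Z) = comm X Y - comm X (Z :: 'a::field mat)"
proof -
  have "comm X (Y - Z) = X * Y - X * Z - (Y * X - Z * X)"
    using assms by (simp add: comm_def mult_distrib_assoc_mat_dims)
  also have "\<dots> = comm X Y - comm X Z"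
    unfolding comm_def by (rule eq_matI) (use assms in \<open>simp_all del: index_mult_mat(1)\<close>)
  finally show ?thesis .
qed

lemma comm_jacobi:
  assumes "X \<in> carrier_mat n n" "Y \<in> carrier_mat n n" "Z \<in> carrier_mat n n"
  shows "comm X (comm Y Z) = comm (comm X Y) Z + comm Y (comm X (Z :: 'a::field mat))"
proof -
  have "comm X (comm Y Z) = X * (Y * Z) - X * (Z * Y) - (Y * (Z * X) - Z * (Y * X))"
    using assms by (simp add: comm_def mult_distrib_assoc_mat_dims)
  moreover have "comm (comm X Y) Z = X * (Y * Z) - Y * (X * Z) - (Z * (X * Y) - Z * (Y * X))"
    using assms by (simp add: comm_def mult_distrib_assoc_mat_dims)
  moreover have "comm Y (comm X Z) = Y * (X * Z) - Y * (Z * X) - (X * (Z * Y) - Z * (X * Y))"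
    using assms by (simp add: comm_def mult_distrib_assoc_mat_dims)
  ultimately show ?thesis
    by (intro eq_matI) (use assms in \<open>simp_all del: index_mult_mat(1)\<close>)
qed

lemma pow_mat_intertwine:
  fixes B C D :: "'a::semiring_1 mat"
  assumes "B \<in> carrier_mat n n" "C \<in> carrier_mat n m" "D \<in> carrier_mat m m" "B * C = C * D"
  shows "B ^\<^sub>m k * C = C * D ^\<^sub>m k"
proof (induction k)
  case 0
  then show ?case using assms by simp
next
  case (Suc k)
  have "B ^\<^sub>m Suc k * C = B ^\<^sub>m k * (B * C)"
    using assms by (simp add: assoc_mult_mat[of _ n n _ n _ m])
  also have "\<dots> = (B ^\<^sub>m k * C) * D"
    using assms by (simp add: assoc_mult_mat[of _ n n _ m _ m])
  also have "\<dots> = C * D ^\<^sub>m Suc k"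
    using assms by (simp add: Suc assoc_mult_mat[of _ n m _ m _ m])
  finally show ?case .
qed

lemma mult_mat_zero_vec: "A \<in> carrier_mat m n \<Longrightarrow> A *\<^sub>v 0\<^sub>v n = (0\<^sub>v m :: 'a::semiring_0 vec)"
  by (intro eq_vecI) auto

lemma is_subspace_mat_kernel:
  fixes A :: "'a::field mat"
  assumes "A \<in> carrier_mat m n"
  shows "is_subspace n (mat_kernel A)"
  using assms mult_mat_zero_vec[OF assms] mat_kernel_smult[OF assms]
  unfolding is_subspace_def mat_kernel[OF assms]
  by (auto simp: mult_add_distrib_mat_vec)

lemma is_subspace_INT:
  assumes "\<And>k. is_subspace n (W k)"
  shows "is_subspace n (\<Inter>k. W k)"
  unfolding is_subspace_def
proof (intro conjI ballI allI)
  show "(\<Inter>k. W k) \<subseteq> carrier_vec n"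
    using assms[of undefined] unfolding is_subspace_def by auto
  show "0\<^sub>v n \<in> (\<Inter>k. W k)"
    using assms unfolding is_subspace_def by auto
  fix v w c assume "v \<in> (\<Inter>k. W k)" "w \<in> (\<Inter>k. W k)"
  then show "v + w \<in> (\<Inter>k. W k)" "c \<cdot>\<^sub>v v \<in> (\<Inter>k. W k)"
    using assms unfolding is_subspace_def by auto
qed

lemma invariant_INT_mat_kernel:
  fixes F :: "'i \<Rightarrow> 'a::field mat"
  assumes F: "\<And>k. F k \<in> carrier_mat m n" and M: "M \<in> carrier_mat n n"
    and shift: "\<And>k. \<exists>N l. N \<in> carrier_mat m m \<and> F k * M = N * F l"
  shows "invariant M (\<Inter>k. mat_kernel (F k))"
  unfolding invariant_def
proof (intro ballI INT_I)
  fix v k assume v: "v \<in> (\<Inter>k. mat_kernel (F k))"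
  obtain N l where N: "N \<in> carrier_mat m m" and FM: "F k * M = N * F l"
    using shift by blast
  have "v \<in> carrier_vec n" and Fl: "F l *\<^sub>v v = 0\<^sub>v m"
    using v mat_kernelD[OF F] by blast+
  have "F k *\<^sub>v (M *\<^sub>v v) = (N * F l) *\<^sub>v v"
    using F M \<open>v \<in> carrier_vec n\<close> by (simp flip: FM add: assoc_mult_mat_vec[of _ m n])
  also have "\<dots> = 0\<^sub>v m"
    using assoc_mult_mat_vec[OF N F \<open>v \<in> carrier_vec n\<close>] Fl mult_mat_zero_vec[OF N] by simp
  finally show "M *\<^sub>v v \<in> mat_kernel (F k)"
    using F M \<open>v \<in> carrier_vec n\<close> by (intro mat_kernelI) auto
qed

lemma contains_image_INT_mat_kernel:
  fixes F :: "'i \<Rightarrow> 'a::field mat"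
  assumes F: "\<And>k. F k \<in> carrier_mat m n" and I: "I \<in> carrier_mat n r"
    and FI: "\<And>k. F k * I = 0\<^sub>m m r"
  shows "contains_image r I (\<Inter>k. mat_kernel (F k))"
  unfolding contains_image_def
proof (intro ballI INT_I)
  fix u :: "'a vec" and k assume u: "u \<in> carrier_vec r"
  have "F k *\<^sub>v (I *\<^sub>v u) = 0\<^sub>m m r *\<^sub>v u"
    using assoc_mult_mat_vec[OF F I u] by (simp add: FI)
  also have "\<dots> = 0\<^sub>v m"
    using u by (intro eq_vecI) auto
  finally show "I *\<^sub>v u \<in> mat_kernel (F k)"
    using F I u by (intro mat_kernelI) auto
qed

lemma carrier_subset_mat_kernel_imp_zero:
  fixes A :: "'a::field mat"
  assumes A: "A \<in> carrier_mat m n" and ker: "carrier_vec n \<subseteq> mat_kernel A"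
  shows "A = 0\<^sub>m m n"
proof (rule eq_matI)
  fix a b assume ab: "a < dim_row (0\<^sub>m m n :: 'a mat)" "b < dim_col (0\<^sub>m m n :: 'a mat)"
  have "A *\<^sub>v unit_vec n b = 0\<^sub>v m"
    using ker mat_kernelD[OF A] unit_vec_carrier by blast
  then have "(A *\<^sub>v unit_vec n b) $ a = 0"
    using ab by simp
  then show "A $$ (a, b) = 0\<^sub>m m n $$ (a, b)"
    using A ab by simp
qed (use A in auto)

lemma A_mat_carrier: "A_mat r \<in> carrier_mat r r"
  by (simp add: A_mat_def)

lemma Q_stable_commuting_annihilator_eq_zero:
  assumes Q: "Q_stable r n B1 B2 B3 I J" and c: "c \<in> carrier_mat n n"
    and cI: "c * I = 0\<^sub>m n r" and cB1: "comm c B1 = 0\<^sub>m n n" and cB2: "comm c B2 = 0\<^sub>m n n"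
  shows "c = 0\<^sub>m n n"
proof -
  have car: "B1 \<in> carrier_mat n n" "B2 \<in> carrier_mat n n" "B3 \<in> carrier_mat n n" "I \<in> carrier_mat n r"
    and B3I: "B3 * I = I * A_mat r"
    and B3B1: "comm B3 B1 = 0\<^sub>m n n" and B3B2: "comm B3 B2 = 0\<^sub>m n n"
    and stable: "\<And>W. is_subspace n W \<Longrightarrow> invariant B1 W \<Longrightarrow> invariant B2 W \<Longrightarrow>
      invariant B3 W \<Longrightarrow> contains_image r I W \<Longrightarrow> W = carrier_vec n"
    using Q unfolding Q_stable_def by blast+
  define F where "F k = c * B3 ^\<^sub>m k" for k
  have F: "F k \<in> carrier_mat n n" for k
    using c car by (simp add: F_def)
  have F_B3: "F k * B3 = F (Suc k)" for k
    using c car by (simp add: F_def assoc_mult_mat[of _ n n _ n _ n])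
  have F_comm: "F k * B = B * F k"
    if B: "B \<in> carrier_mat n n" and "comm c B = 0\<^sub>m n n" and "comm B3 B = 0\<^sub>m n n" for B k
  proof -
    have "c * B = B * c" and "B3 * B = B * B3"
      using that c car comm_eq_zero_iff by blast+
    then have "B3 ^\<^sub>m k * B = B * B3 ^\<^sub>m k"
      using B car pow_mat_intertwine by blast
    have "F k * B = c * (B * B3 ^\<^sub>m k)"
      using B c car \<open>B3 ^\<^sub>m k * B = B * B3 ^\<^sub>m k\<close> by (simp add: F_def assoc_mult_mat[of _ n n _ n _ n])
    also have "\<dots> = (B * c) * B3 ^\<^sub>m k"
      using B c car \<open>c * B = B * c\<close> by (simp flip: assoc_mult_mat[of _ n n _ n _ n])
    also have "\<dots> = B * F k"
      using B c car by (simp add: F_def assoc_mult_mat[of _ n n _ n _ n])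
    finally show ?thesis .
  qed
  have F_I: "F k * I = 0\<^sub>m n r" for k
  proof -
    have "F k * I = c * (I * A_mat r ^\<^sub>m k)"
      using c car pow_mat_intertwine[OF car(3,4) A_mat_carrier B3I] by (simp add: F_def assoc_mult_mat[of _ n n _ n _ r])
    also have "\<dots> = 0\<^sub>m n r * A_mat r ^\<^sub>m k"
      using assoc_mult_mat[OF c car(4) pow_carrier_mat[OF A_mat_carrier]] by (simp add: cI)
    finally show ?thesis
      using left_mult_zero_mat[OF pow_carrier_mat[OF A_mat_carrier]] by simp
  qed
  have "(\<Inter>k. mat_kernel (F k)) = carrier_vec n"
  proof (rule stable)
    show "is_subspace n (\<Inter>k. mat_kernel (F k))"
      using is_subspace_mat_kernel[OF F] by (rule is_subspace_INT)
    show "invariant B1 (\<Inter>k. mat_kernel (F k))"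
      by (rule invariant_INT_mat_kernel[OF F car(1)]) (use car(1) F_comm[OF car(1) cB1 B3B1] in blast)
    show "invariant B2 (\<Inter>k. mat_kernel (F k))"
      by (rule invariant_INT_mat_kernel[OF F car(2)]) (use car(2) F_comm[OF car(2) cB2 B3B2] in blast)
    show "invariant B3 (\<Inter>k. mat_kernel (F k))"
      by (rule invariant_INT_mat_kernel[OF F car(3)]) (metis F F_B3 left_mult_one_mat one_carrier_mat)
    show "contains_image r I (\<Inter>k. mat_kernel (F k))"
      by (rule contains_image_INT_mat_kernel[OF F car(4) F_I])
  qed
  then have "carrier_vec n \<subseteq> mat_kernel (F 0)"
    by blast
  moreover have "F 0 = c"
    using c car by (simp add: F_def)
  ultimately show ?thesis
    using carrier_subset_mat_kernel_imp_zero[OF c] by simp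
qed

lemma tangent_defect_annihilates_frame:
  fixes b3 b3' B3 I i i' \<xi> A :: "'k::field mat"
  assumes car: "b3 \<in> carrier_mat n n" "b3' \<in> carrier_mat n n" "B3 \<in> carrier_mat n n"
    "\<xi> \<in> carrier_mat n n" "I \<in> carrier_mat n r" "i \<in> carrier_mat n r" "i' \<in> carrier_mat n r"
    "A \<in> carrier_mat r r"
  and t: "b3 * I + B3 * i = i * A" and t': "b3' * I + B3 * i' = i' * A"
  and \<xi>I: "i - i' = \<xi> * I" and B3I: "B3 * I = I * A"
  shows "(b3 - b3' - comm \<xi> B3) * I = 0\<^sub>m n r"
proof -
  have "(b3 - b3' - comm \<xi> B3) * I = b3 * I - b3' * I - ((\<xi> * I) * A - B3 * (\<xi> * I))"
    using car by (simp add: comm_def mult_distrib_assoc_mat_dims B3I)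
  also have "\<dots> = b3 * I - b3' * I - (i * A - i' * A - (B3 * i - B3 * i'))"
    using car by (simp add: \<xi>I[symmetric] mult_distrib_assoc_mat_dims)
  also have "\<dots> = b3 * I - b3' * I - ((b3 * I + B3 * i) - (b3' * I + B3 * i') - (B3 * i - B3 * i'))"
    by (simp only: t t')
  also have "\<dots> = 0\<^sub>m n r"
    by (rule eq_matI) (use car in \<open>simp_all del: index_mult_mat(1)\<close>)
  finally show ?thesis .
qed

lemma tangent_defect_commutes:
  fixes b3 b3' B3 B b b' \<xi> :: "'k::field mat"
  assumes car: "b3 \<in> carrier_mat n n" "b3' \<in> carrier_mat n n" "B3 \<in> carrier_mat n n"
    "\<xi> \<in> carrier_mat n n" "B \<in> carrier_mat n n" "b \<in> carrier_mat n n" "b' \<in> carrier_mat n n"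
  and t: "comm b3 B + comm B3 b = 0\<^sub>m n n" and t': "comm b3' B + comm B3 b' = 0\<^sub>m n n"
  and \<xi>B: "b - b' = comm \<xi> B" and B3B: "comm B3 B = 0\<^sub>m n n"
  shows "comm (b3 - b3' - comm \<xi> B3) B = 0\<^sub>m n n"
proof -
  have "comm B3 (comm \<xi> B) = comm B3 b - comm B3 b'"
    using car by (simp flip: \<xi>B add: comm_minus_right)
  moreover have "comm b3 B = - comm B3 b" "comm b3' B = - comm B3 b'"
    using add_eq_zero_mat_imp_eq_uminus[OF _ _ t] add_eq_zero_mat_imp_eq_uminus[OF _ _ t'] car
    by simp_all
  ultimately have diff: "comm b3 B - comm b3' B = - comm B3 (comm \<xi> B)"
    by (intro eq_matI) (use car in auto)
  have "comm (b3 - b3' - comm \<xi> B3) B = comm (b3 - b3') B - comm (comm \<xi> B3) B"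
    using car by (intro comm_minus_left) auto
  also have "\<dots> = - comm B3 (comm \<xi> B) - comm (comm \<xi> B3) B"
    by (simp add: comm_minus_left[OF car(1,2,5)] diff)
  also have "\<dots> = - comm \<xi> (comm B3 B)"
    using comm_jacobi[OF car(4,3,5)] car by (intro eq_matI) auto
  also have "\<dots> = 0\<^sub>m n n"
    unfolding B3B using car by (intro eq_matI) (auto simp: comm_def)
  finally show ?thesis .
qed

theorem lemma3p7:
  fixes \<phi> :: "complex \<Rightarrow> 'k::field"
    and B1 B2 B3 I J :: "'k mat"
    and t t' :: "'k mat \<times> 'k mat \<times> 'k mat \<times> 'k mat \<times> 'k mat"
  assumes "field_ext_of_C \<phi>"
    and "Q_stable r n B1 B2 B3 I J"
    and "Q_tangent r n B1 B2 B3 I J t"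
    and "Q_tangent r n B1 B2 B3 I J t'"
    and "ADHM_equiv r n B1 B2 I J (forget_tangent t) (forget_tangent t')"
  shows "Q_equiv r n B1 B2 B3 I J t t'"
proof -
  obtain b1 b2 b3 i j where t: "t = (b1, b2, b3, i, j)"
    by (cases t) auto
  obtain b1' b2' b3' i' j' where t': "t' = (b1', b2', b3', i', j')"
    by (cases t') auto
  obtain \<xi> where \<xi>: "\<xi> \<in> carrier_mat n n" "b1 - b1' = comm \<xi> B1" "b2 - b2' = comm \<xi> B2"
    "i - i' = \<xi> * I" "j - j' = - (J * \<xi>)"
    using assms(5) unfolding ADHM_equiv_def forget_tangent_def t t' by auto
  note Q = assms(2)[unfolded Q_stable_def]
    and T = assms(3)[unfolded Q_tangent_def t, simplified]
    and T' = assms(4)[unfolded Q_tangent_def t', simplified]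
  have "b3 - b3' - comm \<xi> B3 = 0\<^sub>m n n"
  proof (rule Q_stable_commuting_annihilator_eq_zero[OF assms(2)])
    show "b3 - b3' - comm \<xi> B3 \<in> carrier_mat n n"
      using T T' Q \<xi> by auto
    show "(b3 - b3' - comm \<xi> B3) * I = 0\<^sub>m n r"
      by (rule tangent_defect_annihilates_frame[OF _ _ _ _ _ _ _ A_mat_carrier]) (use T T' Q \<xi> in auto)
    show "comm (b3 - b3' - comm \<xi> B3) B1 = 0\<^sub>m n n" "comm (b3 - b3' - comm \<xi> B3) B2 = 0\<^sub>m n n"
      by (rule tangent_defect_commutes; use T T' Q \<xi> in auto)+
  qed
  then have "b3 - b3' = comm \<xi> B3"
    using T T' Q \<xi> minus_eq_zero_mat_iff by (metis comm_carrier_mat minus_carrier_mat)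
  then show ?thesis
    using \<xi> unfolding Q_equiv_def t t' by auto
qed

end
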